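(* Let $D\subseteq\mathbb{R}^{p+2}$ be an open set invariant under $(\mathbf{x}_p,r)\mapsto(\mathbf{x}_p,-r)$ and let $f$ be a generalized partial-slice function on $\Omega_D$ induced by a $C^1$ stem function, with $f\in C^1(\Omega_D,\mathbb{A})$. Then on $\Omega_D\setminus\mathbb{R}^{p+1}$: (i) $\Gamma f(\mathbf{x})=(q-1)\,\underline{\mathbf{x}}_q f'_s(\mathbf{x})$; (ii) $(D_{\mathbf{x}}-D_{\underline{\omega}})f(\mathbf{x})=(1-q)f'_s(\mathbf{x})$.
   Context: Let $\mathbb{A}$ be a real alternative algebra (the associator $[a,b,c]=(ab)c-a(bc)$ is an alternating trilinear function) with unity $1$, of finite real dimension $d>1$, equipped with an anti-involution $a\mapsto a^c$ (real linear, $a^c=a$ for real $a$, $(a^c)^c=a$, $(ab)^c=b^ca^c$). Let $t(x)=x+x^c$, $n(x)=xx^c$, $\mathbb{S}_{\mathbb{A}}=\{x: t(x)=0,\ n(x)=1\}$ (assumed nonempty) and $Q_{\mathbb{A}}=\mathbb{R}\cup\{x: t(x)\in\mathbb{R},\ n(x)\in\mathbb{R},\ 4n(x)>t(x)^2\}$. Let $M$ be a real subspace with $\mathbb{R}\subsetneq M\subseteq Q_{\mathbb{A}}$ having a basis $(v_0,\dots,v_m)$, $m\ge1$, $v_0=1$, $v_s\in\mathbb{S}_{\mathbb{A}}$, $v_sv_t=-v_tv_s$ for distinct $s,t\ge1$; complete it to a basis of $\mathbb{A}$ with associated Euclidean norm. Identify $x=\sum x_sv_s\in M$ with $(x_0,\dots,x_m)\in\mathbb{R}^{m+1}$;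 differentiate componentwise. Fix $p\in\{0,\dots,m-1\}$, $q=m-p$; $\mathbf{x}=\mathbf{x}_p+\underline{\mathbf{x}}_q$ with $\mathbf{x}_p=\sum_{s=0}^px_sv_s\in\mathbb{R}^{p+1}$, $\underline{\mathbf{x}}_q=\sum_{s=p+1}^m x_sv_s$; $\mathbb{S}=\{\sum_{s=p+1}^m x_sv_s:\sum x_s^2=1\}$; $\underline{\mathbf{x}}_q=r\underline{\omega}$, $r=|\underline{\mathbf{x}}_q|$, $\underline{\omega}\in\mathbb{S}$; $\mathbf{x}'=(\mathbf{x}_p,r)$, $\mathbf{x}_\diamond=\mathbf{x}_p-\underline{\mathbf{x}}_q$. $D_{\mathbf{x}_p}f=\sum_{s=0}^p v_s\partial_{x_s}f$, $D_{\mathbf{x}}f=\sum_{s=0}^mv_s\partial_{x_s}f$; for $\mathbf{x}=\mathbf{x}_p+r\underline{\omega}$, $D_{\underline{\omega}}f(\mathbf{x})=(D_{\mathbf{x}_p}+\underline{\omega}\partial_r)f(\mathbf{x}_p+r\underline{\omega})$ (computed on the slice $\mathbb{R}^{p+1}\oplus\underline{\omega}\mathbb{R}$). Spherical Dirac operator: $\Gamma f=-\frac12\sum_{i,j=p+1}^{m}v_i(v_j(L_{ij}f))$ with $L_{ij}=x_i\partial_{x_j}-x_j\partial_{x_i}$. For open $D\subseteq\mathbb{R}^{p+2}$ invariant under $(\mathbf{x}_p,r)\mapsto(\mathbf{x}_p,-r)$, $\Omega_D=\{\mathbf{x}_p+r\underline{\omega}:(\mathbf{x}_p,r)\in D,\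 r\ge0,\ \underline{\omega}\in\mathbb{S}\}$. A stem function $(F_1,F_2):D\to\mathbb{A}^2$ has $F_1$ even and $F_2$ odd in $r$, and induces the generalized partial-slice function $f(\mathbf{x}_p+r\underline{\omega})=F_1(\mathbf{x}')+\underline{\omega}F_2(\mathbf{x}')$. Spherical derivative: $f'_s(\mathbf{x})=\frac12\underline{\mathbf{x}}_q^{-1}(f(\mathbf{x})-f(\mathbf{x}_\diamond))$ for $\mathbf{x}\in\Omega_D\setminus\mathbb{R}^{p+1}$. *)

theory Defs
  imports "HOL-Analysis.Analysis"
begin

definition assoc :: "('a::real_vector \<Rightarrow> 'a \<Rightarrow> 'a) \<Rightarrow> 'a \<Rightarrow> 'a \<Rightarrow> 'a \<Rightarrow> 'a" where
  "assoc mul a b c = mul (mul a b) c - mul a (mul b c)"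

definition is_real :: "'a::real_vector \<Rightarrow> 'a \<Rightarrow> bool" where
  "is_real one a \<longleftrightarrow> (\<exists>c::real. a = c *\<^sub>R one)"

definition alt_algebra_inv ::
  "('a::real_vector \<Rightarrow> 'a \<Rightarrow> 'a) \<Rightarrow> 'a \<Rightarrow> ('a \<Rightarrow> 'a) \<Rightarrow> bool" where
  "alt_algebra_inv mul one cj \<longleftrightarrow>
     bilinear mul \<and>
     (\<forall>a. mul one a = a \<and> mul a one = a) \<and>
     (\<forall>a b. assoc mul a a b = 0 \<and> assoc mul a b a = 0 \<and> assoc mul b a a = 0) \<and>
     linear cj \<and>
     (\<forall>a. is_real one a \<longrightarrow> cj a = a) \<and>
     (\<forall>a. cj (cj a) = a) \<and>
     (\<forall>a b. cj (mul a b) = mul (cj b) (cj a))"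

definition trace :: "('a::real_vector \<Rightarrow> 'a) \<Rightarrow> 'a \<Rightarrow> 'a" where
  "trace cj x = x + cj x"

definition anorm :: "('a::real_vector \<Rightarrow> 'a \<Rightarrow> 'a) \<Rightarrow> ('a \<Rightarrow> 'a) \<Rightarrow> 'a \<Rightarrow> 'a" where
  "anorm mul cj x = mul x (cj x)"

definition SA :: "('a::real_vector \<Rightarrow> 'a \<Rightarrow> 'a) \<Rightarrow> 'a \<Rightarrow> ('a \<Rightarrow> 'a) \<Rightarrow> 'a set" where
  "SA mul one cj = {x. trace cj x = 0 \<and> anorm mul cj x = one}"

definition QA :: "('a::real_vector \<Rightarrow> 'a \<Rightarrow> 'a) \<Rightarrow> 'a \<Rightarrow> ('a \<Rightarrow> 'a) \<Rightarrow> 'a set" where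
  "QA mul one cj = {x. is_real one x} \<union>
     {x. \<exists>a b::real. trace cj x = a *\<^sub>R one \<and> anorm mul cj x = b *\<^sub>R one \<and> 4 * b > a\<^sup>2}"

definition ainv :: "('a \<Rightarrow> 'a \<Rightarrow> 'a) \<Rightarrow> 'a \<Rightarrow> 'a \<Rightarrow> 'a" where
  "ainv mul one x = (THE y. mul x y = one \<and> mul y x = one)"

definition pdir :: "('b::real_normed_vector \<Rightarrow> 'c::real_normed_vector) \<Rightarrow> 'b \<Rightarrow> 'b \<Rightarrow> 'c" where
  "pdir g u z = vector_derivative (\<lambda>t. g (z + t *\<^sub>R u)) (at 0)"

definition C1_dirs :: "'b::real_normed_vector set \<Rightarrow> 'b set \<Rightarrow> ('b \<Rightarrow> 'c::real_normed_vector) \<Rightarrow> bool" where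
  "C1_dirs U S g \<longleftrightarrow>
     (\<forall>u\<in>U. (\<forall>z\<in>S. (\<lambda>t. g (z + t *\<^sub>R u)) differentiable (at 0)) \<and> continuous_on S (pdir g u))"

text \<open>Unit sphere of the q-part, with respect to the Euclidean norm in which v is orthonormal.\<close>
definition sphq :: "(nat \<Rightarrow> 'a::real_vector) \<Rightarrow> nat \<Rightarrow> nat \<Rightarrow> 'a set" where
  "sphq v p m = {(\<Sum>s\<in>{p+1..m}. c s *\<^sub>R v s) | c. (\<Sum>s\<in>{p+1..m}. (c s)\<^sup>2) = 1}"

definition OmegaD :: "(nat \<Rightarrow> 'a::real_vector) \<Rightarrow> nat \<Rightarrow> nat \<Rightarrow> ('a \<times> real) set \<Rightarrow> 'a set" where
  "OmegaD v p m D = {y + r *\<^sub>R w | y r w. (y, r) \<in> D \<and> r \<ge> 0 \<and> w \<in> sphq v p m}"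

definition pt :: "(nat \<Rightarrow> 'a::real_vector) \<Rightarrow> nat \<Rightarrow> (nat \<Rightarrow> real) \<Rightarrow> 'a" where
  "pt v m xc = (\<Sum>s\<in>{0..m}. xc s *\<^sub>R v s)"

definition xpart :: "(nat \<Rightarrow> 'a::real_vector) \<Rightarrow> nat \<Rightarrow> (nat \<Rightarrow> real) \<Rightarrow> 'a" where
  "xpart v p xc = (\<Sum>s\<in>{0..p}. xc s *\<^sub>R v s)"

definition xqpart :: "(nat \<Rightarrow> 'a::real_vector) \<Rightarrow> nat \<Rightarrow> nat \<Rightarrow> (nat \<Rightarrow> real) \<Rightarrow> 'a" where
  "xqpart v p m xc = (\<Sum>s\<in>{p+1..m}. xc s *\<^sub>R v s)"

definition rad :: "nat \<Rightarrow> nat \<Rightarrow> (nat \<Rightarrow> real) \<Rightarrow> real" where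
  "rad p m xc = sqrt (\<Sum>s\<in>{p+1..m}. (xc s)\<^sup>2)"

definition sph_deriv ::
  "('a::real_vector \<Rightarrow> 'a \<Rightarrow> 'a) \<Rightarrow> 'a \<Rightarrow> (nat \<Rightarrow> 'a) \<Rightarrow> nat \<Rightarrow> nat \<Rightarrow> ('a \<Rightarrow> 'a) \<Rightarrow> (nat \<Rightarrow> real) \<Rightarrow> 'a" where
  "sph_deriv mul one v p m f xc =
     (1/2) *\<^sub>R mul (ainv mul one (xqpart v p m xc))
        (f (pt v m xc) - f (xpart v p xc - xqpart v p m xc))"

definition Gamma_op ::
  "('a::real_normed_vector \<Rightarrow> 'a \<Rightarrow> 'a) \<Rightarrow> (nat \<Rightarrow> 'a) \<Rightarrow> nat \<Rightarrow> nat \<Rightarrow> ('a \<Rightarrow> 'a) \<Rightarrow> (nat \<Rightarrow> real) \<Rightarrow> 'a" where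
  "Gamma_op mul v p m f xc =
     - (1/2) *\<^sub>R (\<Sum>i\<in>{p+1..m}. \<Sum>j\<in>{p+1..m}.
        mul (v i) (mul (v j)
          (xc i *\<^sub>R pdir f (v j) (pt v m xc) - xc j *\<^sub>R pdir f (v i) (pt v m xc))))"

definition Dx_op ::
  "('a::real_normed_vector \<Rightarrow> 'a \<Rightarrow> 'a) \<Rightarrow> (nat \<Rightarrow> 'a) \<Rightarrow> nat \<Rightarrow> ('a \<Rightarrow> 'a) \<Rightarrow> (nat \<Rightarrow> real) \<Rightarrow> 'a" where
  "Dx_op mul v m f xc = (\<Sum>s\<in>{0..m}. mul (v s) (pdir f (v s) (pt v m xc)))"

definition Domega_op ::
  "('a::real_normed_vector \<Rightarrow> 'a \<Rightarrow> 'a) \<Rightarrow> (nat \<Rightarrow> 'a) \<Rightarrow> nat \<Rightarrow> nat \<Rightarrow> ('a \<Rightarrow> 'a) \<Rightarrow> (nat \<Rightarrow> real) \<Rightarrow> 'a" where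
  "Domega_op mul v p m f xc =
     (let r = rad p m xc; w = (1 / r) *\<^sub>R xqpart v p m xc; y = xpart v p xc in
      (\<Sum>s\<in>{0..p}. mul (v s) (pdir (\<lambda>z. f z) (v s) (y + r *\<^sub>R w)))
      + mul w (vector_derivative (\<lambda>t. f (y + t *\<^sub>R w)) (at r)))"

end

theory Submission
  imports Defs
begin

(* Along the slice through x, f = F1(x_p, r) + omega F2(x_p, r), hence
   f(x) - f(x_diamond) = 2 omega F2 and the spherical derivative is F2 / r.
   Moving a single coordinate x_j with j > p changes only r and omega, so the chain rule gives
     d_j f = (x_j / r) d_r f + (v_j / r - x_j x_q / r^3) F2,   where d_r f = d_r F1 + omega d_r F2.
   In Gamma f and in (D_x - D_omega) f the d_r f terms cancel, and what remains is evaluated with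
   v_j v_j = -1, v_i v_j = - v_j v_i and x_q x_q = - r^2. Although the algebra is not associative,
   every product that occurs has the form v_i (v_j z), so the left alternative law
   a (a b) = (a a) b and its linearisation suffice. *)

lemma sum_sum_skew_eq_diagonal:
  fixes a :: "'i \<Rightarrow> 'i \<Rightarrow> 'b::ab_group_add"
  assumes "finite I" "\<And>i j. i \<in> I \<Longrightarrow> j \<in> I \<Longrightarrow> i \<noteq> j \<Longrightarrow> a i j + a j i = 0"
  shows "(\<Sum>i\<in>I. \<Sum>j\<in>I. a i j) = (\<Sum>i\<in>I. a i i)"
  using assms
proof (induction I rule: finite_induct)
  case empty
  then show ?case by simp
next
  case (insert x F)
  have cross: "(\<Sum>j\<in>F. a x j) + (\<Sum>i\<in>F. a i x) = 0"
    unfolding sum.distrib[symmetric] using insert by (intro sum.neutral) auto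
  have "(\<Sum>i\<in>insert x F. \<Sum>j\<in>insert x F. a i j)
      = a x x + ((\<Sum>j\<in>F. a x j) + (\<Sum>i\<in>F. a i x)) + (\<Sum>i\<in>F. \<Sum>j\<in>F. a i j)"
    using insert by (simp add: sum.distrib ac_simps)
  also have "\<dots> = (\<Sum>i\<in>insert x F. a i i)"
    using insert cross by simp
  finally show ?case .
qed

lemma independent_coefficients_unique:
  fixes v :: "nat \<Rightarrow> 'a::real_vector"
  assumes "finite I" "inj_on v I" "independent (v ` I)"
    and "(\<Sum>s\<in>I. a s *\<^sub>R v s) = (\<Sum>s\<in>I. b s *\<^sub>R v s)" and "s \<in> I"
  shows "a s = b s"
proof -
  have "(\<Sum>w\<in>v ` I. (a (the_inv_into I v w) - b (the_inv_into I v w)) *\<^sub>R w)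
      = (\<Sum>s\<in>I. (a s - b s) *\<^sub>R v s)"
    using assms(2) by (simp add: sum.reindex the_inv_into_f_f)
  also have "\<dots> = 0"
    using assms(4) by (simp add: scaleR_left_diff_distrib sum_subtractf)
  finally show ?thesis
    using assms(1,2,3,5) independent_explicit_finite_subsets[of "v ` I"]
    by (force simp: the_inv_into_f_f)
qed

lemma span_image_as_sum:
  fixes v :: "nat \<Rightarrow> 'a::real_vector"
  assumes "finite I" "inj_on v I" "z \<in> span (v ` I)"
  obtains c where "z = (\<Sum>s\<in>I. c s *\<^sub>R v s)"
proof -
  obtain c where "z = (\<Sum>u\<in>v ` I. c u *\<^sub>R u)"
    using assms(1,3) span_finite[of "v ` I"] by auto
  also have "\<dots> = (\<Sum>s\<in>I. c (v s) *\<^sub>R v s)"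
    using assms(2) by (simp add: sum.reindex)
  finally show ?thesis by (rule that)
qed

lemma sum_split_at:
  fixes g :: "nat \<Rightarrow> 'b::comm_monoid_add"
  assumes "p < m"
  shows "(\<Sum>s\<in>{0..m}. g s) = (\<Sum>s\<in>{0..p}. g s) + (\<Sum>s\<in>{p+1..m}. g s)"
  using sum.ub_add_nat[of 0 p g "m - p"] assms by simp

section \<open>Alternative algebras with anticommuting units\<close>

context
  fixes mul :: "'a::real_vector \<Rightarrow> 'a \<Rightarrow> 'a" and one :: 'a and cj :: "'a \<Rightarrow> 'a"
  assumes alg: "alt_algebra_inv mul one cj"
begin

lemma alt_algebra_bilinear: "bilinear mul"
  using alg by (simp add: alt_algebra_inv_def)

lemma alt_algebra_unit: "mul one a = a" "mul a one = a"
  using alg by (simp_all add: alt_algebra_inv_def)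

lemma alt_algebra_left_alternative: "mul a (mul a b) = mul (mul a a) b"
  using alg unfolding alt_algebra_inv_def assoc_def by (metis eq_iff_diff_eq_0)

lemma alt_algebra_anticommutator_left:
  "mul a (mul b c) + mul b (mul a c) = mul (mul a b + mul b a) c"
proof -
  note B = alt_algebra_bilinear
  have "mul (a + b) (mul (a + b) c) = mul (mul (a + b) (a + b)) c"
    by (rule alt_algebra_left_alternative)
  then show ?thesis
    using alt_algebra_left_alternative[of a c] alt_algebra_left_alternative[of b c]
    by (simp add: bilinear_ladd[OF B] bilinear_radd[OF B] algebra_simps)
qed

lemma SA_mul_self:
  assumes "x \<in> SA mul one cj"
  shows "mul x x = - one"
proof -
  have "cj x = - x" "mul x (cj x) = one"
    using assms by (auto simp: SA_def trace_def anorm_def eq_neg_iff_add_eq_0 add.commute)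
  then show ?thesis
    using bilinear_rneg[OF alt_algebra_bilinear] by (metis minus_minus)
qed

end

locale anticommuting_frame =
  fixes mul :: "'a::real_vector \<Rightarrow> 'a \<Rightarrow> 'a" and one :: 'a and cj :: "'a \<Rightarrow> 'a"
    and v :: "nat \<Rightarrow> 'a" and Q :: "nat set"
  assumes alg: "alt_algebra_inv mul one cj"
    and frame_SA: "\<And>s. s \<in> Q \<Longrightarrow> v s \<in> SA mul one cj"
    and frame_anticomm: "\<And>s t. s \<in> Q \<Longrightarrow> t \<in> Q \<Longrightarrow> s \<noteq> t \<Longrightarrow> mul (v s) (v t) = - mul (v t) (v s)"
    and finite_frame: "finite Q"
begin

lemma mul_bilinear: "bilinear mul"
  using alg by (rule alt_algebra_bilinear)

lemma mul_simps:
  "mul (a + b) c = mul a c + mul b c"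
  "mul a (b + c) = mul a b + mul a c"
  "mul (a - b) c = mul a c - mul b c"
  "mul a (b - c) = mul a b - mul a c"
  "mul (- a) c = - mul a c"
  "mul a (- c) = - mul a c"
  "mul (k *\<^sub>R a) c = k *\<^sub>R mul a c"
  "mul a (k *\<^sub>R c) = k *\<^sub>R mul a c"
  "mul 0 c = 0"
  "mul a 0 = 0"
  using mul_bilinear
  by (simp_all add: bilinear_ladd bilinear_radd bilinear_lsub bilinear_rsub
      bilinear_lneg bilinear_rneg bilinear_lmul bilinear_rmul bilinear_lzero bilinear_rzero)

lemma mul_sum_left: "mul (\<Sum>s\<in>S. g s) z = (\<Sum>s\<in>S. mul (g s) z)"
  using mul_bilinear by (intro linear_sum) (simp add: bilinear_def)

lemma mul_sum_right: "mul z (\<Sum>s\<in>S. g s) = (\<Sum>s\<in>S. mul z (g s))"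
  using mul_bilinear by (intro linear_sum) (simp add: bilinear_def)

lemma frame_mul_mul_self:
  assumes "i \<in> Q"
  shows "mul (v i) (mul (v i) z) = - z"
proof -
  have "mul (v i) (mul (v i) z) = mul (mul (v i) (v i)) z"
    by (rule alt_algebra_left_alternative[OF alg])
  also have "mul (v i) (v i) = - one"
    using assms by (intro SA_mul_self[OF alg] frame_SA)
  finally show ?thesis
    by (simp add: mul_simps alt_algebra_unit[OF alg])
qed

lemma frame_mul_mul_anticomm:
  assumes "i \<in> Q" "j \<in> Q" "i \<noteq> j"
  shows "mul (v i) (mul (v j) z) = - mul (v j) (mul (v i) z)"
  using alt_algebra_anticommutator_left[OF alg, of "v i" "v j" z] frame_anticomm[OF assms]
  by (simp add: mul_simps eq_neg_iff_add_eq_0)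

lemma frame_sandwich:
  assumes "i \<in> Q" "j \<in> Q"
  shows "mul (v i) (mul (v j) (mul (v i) z))
    = mul (v j) z - (if i = j then 2 *\<^sub>R mul (v i) z else 0)"
proof (cases "i = j")
  case True
  then show ?thesis
    using assms frame_mul_mul_self by (simp add: mul_simps scaleR_2)
next
  case False
  then show ?thesis
    using frame_mul_mul_anticomm[OF assms False] frame_mul_mul_self[OF assms(1)]
    by (simp add: mul_simps)
qed

lemma frame_vector_mul_mul_self:
  "mul (\<Sum>s\<in>Q. c s *\<^sub>R v s) (mul (\<Sum>s\<in>Q. c s *\<^sub>R v s) z) = - (\<Sum>s\<in>Q. (c s)\<^sup>2) *\<^sub>R z"
proof -
  have "mul (\<Sum>s\<in>Q. c s *\<^sub>R v s) (mul (\<Sum>s\<in>Q. c s *\<^sub>R v s) z)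
      = (\<Sum>i\<in>Q. \<Sum>j\<in>Q. (c i * c j) *\<^sub>R mul (v i) (mul (v j) z))"
    by (simp add: mul_sum_left mul_sum_right mul_simps scaleR_sum_right)
      (subst sum.swap, simp add: mult.commute)
  also have "\<dots> = (\<Sum>i\<in>Q. (c i * c i) *\<^sub>R mul (v i) (mul (v i) z))"
    by (intro sum_sum_skew_eq_diagonal finite_frame, subst frame_mul_mul_anticomm)
      (auto simp: mult.commute)
  also have "\<dots> = - (\<Sum>s\<in>Q. (c s)\<^sup>2) *\<^sub>R z"
    by (simp add: frame_mul_mul_self power2_eq_square sum_negf scaleR_sum_left)
  finally show ?thesis .
qed

lemma frame_vector_ainv:
  assumes "(\<Sum>s\<in>Q. (c s)\<^sup>2) > 0"
  shows "ainv mul one (\<Sum>s\<in>Q. c s *\<^sub>R v s) = - inverse (\<Sum>s\<in>Q. (c s)\<^sup>2) *\<^sub>R (\<Sum>s\<in>Q. c s *\<^sub>R v s)"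
  unfolding ainv_def
proof (rule the_equality)
  let ?X = "\<Sum>s\<in>Q. c s *\<^sub>R v s" and ?n = "\<Sum>s\<in>Q. (c s)\<^sup>2"
  have square: "mul ?X ?X = - ?n *\<^sub>R one"
    using frame_vector_mul_mul_self[of c one] alt_algebra_unit[OF alg] by simp
  then show "mul ?X (- inverse ?n *\<^sub>R ?X) = one \<and> mul (- inverse ?n *\<^sub>R ?X) ?X = one"
    using assms by (simp add: mul_simps)
  fix z assume "mul ?X z = one \<and> mul z ?X = one"
  then have "?X = mul ?X (mul ?X z)"
    by (simp add: alt_algebra_unit[OF alg])
  also have "\<dots> = - ?n *\<^sub>R z"
    by (rule frame_vector_mul_mul_self)
  finally show "z = - inverse ?n *\<^sub>R ?X"
    using assms by simp
qed

(* Here and in frame_Dirac_sum, the hypothesis on d is the shape of the partial derivatives of a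
   slice function in the directions v_j (coordinate_derivative below), with G the radial derivative
   and F the odd stem component. *)
lemma frame_Gamma_sum:
  fixes c :: "nat \<Rightarrow> real" and r :: real
  assumes d: "\<And>j. j \<in> Q \<Longrightarrow>
      d j = (c j / r) *\<^sub>R G + mul ((1 / r) *\<^sub>R v j - (c j / r ^ 3) *\<^sub>R (\<Sum>s\<in>Q. c s *\<^sub>R v s)) F"
  shows "(\<Sum>i\<in>Q. \<Sum>j\<in>Q. mul (v i) (mul (v j) (c i *\<^sub>R d j - c j *\<^sub>R d i)))
    = ((2 - 2 * real (card Q)) / r) *\<^sub>R mul (\<Sum>s\<in>Q. c s *\<^sub>R v s) F"
proof -
  define a where "a s = mul (v s) F" for s
  define XF where "XF = (\<Sum>s\<in>Q. c s *\<^sub>R a s)"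
  have summand: "mul (v i) (mul (v j) (c i *\<^sub>R d j - c j *\<^sub>R d i))
      = (1 / r) *\<^sub>R (- c i *\<^sub>R a i - c j *\<^sub>R a j + (if j = i then (2 * c i) *\<^sub>R a i else 0))"
    if "i \<in> Q" "j \<in> Q" for i j
  proof -
    have "c i *\<^sub>R d j - c j *\<^sub>R d i = (1 / r) *\<^sub>R (c i *\<^sub>R mul (v j) F - c j *\<^sub>R mul (v i) F)"
      using that by (simp add: d mul_simps algebra_simps)
    then have "mul (v i) (mul (v j) (c i *\<^sub>R d j - c j *\<^sub>R d i))
        = (1 / r) *\<^sub>R (c i *\<^sub>R mul (v i) (mul (v j) (mul (v j) F))
            - c j *\<^sub>R mul (v i) (mul (v j) (mul (v i) F)))"
      by (simp add: mul_simps)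
    also have "\<dots> = (1 / r) *\<^sub>R (c i *\<^sub>R (- a i) - c j *\<^sub>R (a j - (if i = j then 2 *\<^sub>R a i else 0)))"
      using that by (simp add: frame_mul_mul_self frame_sandwich a_def mul_simps)
    finally show ?thesis
      by (cases "i = j") (simp_all add: algebra_simps)
  qed
  have row: "(\<Sum>j\<in>Q. - c i *\<^sub>R a i - c j *\<^sub>R a j + (if j = i then (2 * c i) *\<^sub>R a i else 0))
      = (2 - real (card Q)) *\<^sub>R c i *\<^sub>R a i - XF" if "i \<in> Q" for i
    using that finite_frame
    by (simp add: XF_def sum.distrib sum_subtractf sum_constant_scaleR algebra_simps)
  have "(\<Sum>i\<in>Q. \<Sum>j\<in>Q. mul (v i) (mul (v j) (c i *\<^sub>R d j - c j *\<^sub>R d i)))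
      = (\<Sum>i\<in>Q. (1 / r) *\<^sub>R ((2 - real (card Q)) *\<^sub>R c i *\<^sub>R a i - XF))"
  proof (rule sum.cong[OF refl])
    fix i assume "i \<in> Q"
    then show "(\<Sum>j\<in>Q. mul (v i) (mul (v j) (c i *\<^sub>R d j - c j *\<^sub>R d i)))
        = (1 / r) *\<^sub>R ((2 - real (card Q)) *\<^sub>R c i *\<^sub>R a i - XF)"
      by (simp only: summand row scaleR_sum_right[symmetric] cong: sum.cong)
  qed
  also have "\<dots> = (1 / r) *\<^sub>R ((2 - real (card Q)) *\<^sub>R XF - real (card Q) *\<^sub>R XF)"
    by (simp only: scaleR_sum_right[symmetric] sum_subtractf sum_constant_scaleR XF_def[symmetric])
  also have "\<dots> = ((2 - 2 * real (card Q)) / r) *\<^sub>R XF"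
    by (simp add: scaleR_diff_left[symmetric] diff_divide_distrib)
  finally show ?thesis
    by (simp add: XF_def a_def mul_sum_left mul_simps)
qed

lemma frame_Dirac_sum:
  fixes c :: "nat \<Rightarrow> real" and r :: real
  assumes d: "\<And>j. j \<in> Q \<Longrightarrow>
      d j = (c j / r) *\<^sub>R G + mul ((1 / r) *\<^sub>R v j - (c j / r ^ 3) *\<^sub>R (\<Sum>s\<in>Q. c s *\<^sub>R v s)) F"
    and norm: "(\<Sum>s\<in>Q. (c s)\<^sup>2) = r\<^sup>2" and "r > 0"
  shows "(\<Sum>j\<in>Q. mul (v j) (d j))
    = mul ((1 / r) *\<^sub>R (\<Sum>s\<in>Q. c s *\<^sub>R v s)) G + ((1 - real (card Q)) / r) *\<^sub>R F"
proof -
  let ?X = "\<Sum>s\<in>Q. c s *\<^sub>R v s"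
  have "mul (v j) (d j) = (c j / r) *\<^sub>R mul (v j) G - (1 / r) *\<^sub>R F
      - (1 / r ^ 3) *\<^sub>R c j *\<^sub>R mul (v j) (mul ?X F)" if "j \<in> Q" for j
    using that by (simp add: d frame_mul_mul_self mul_simps)
  moreover have "(\<Sum>j\<in>Q. (k * c j) *\<^sub>R mul (v j) Z) = k *\<^sub>R mul ?X Z" for k Z
    by (simp add: mul_sum_left scaleR_sum_right mul_simps)
  ultimately have "(\<Sum>j\<in>Q. mul (v j) (d j))
      = (1 / r) *\<^sub>R mul ?X G - (real (card Q) / r) *\<^sub>R F - (1 / r ^ 3) *\<^sub>R mul ?X (mul ?X F)"
    by (simp add: sum_subtractf sum_constant_scaleR divide_inverse mult.commute[of _ "inverse r"]
        mult.commute[of _ "inverse (r ^ 3)"])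
  also have "\<dots> = mul ((1 / r) *\<^sub>R ?X) G + ((1 - real (card Q)) / r) *\<^sub>R F"
    using \<open>r > 0\<close> unfolding frame_vector_mul_mul_self norm
    by (simp add: mul_simps power2_eq_square power3_eq_cube diff_divide_distrib scaleR_diff_left)
  finally show ?thesis .
qed

end

section \<open>Partial-slice functions\<close>

lemma slice_function_has_vector_derivative:
  fixes mul :: "'a::euclidean_space \<Rightarrow> 'a \<Rightarrow> 'a" and F1 F2 :: "'a \<times> real \<Rightarrow> 'a"
    and f :: "'a \<Rightarrow> 'a" and h W :: "real \<Rightarrow> 'a" and \<rho> :: "real \<Rightarrow> real"
    and Y Sph :: "'a set" and D :: "('a \<times> real) set"
  assumes "bilinear mul"
    and D_open: "openin (top_of_set (Y \<times> (UNIV::real set))) D"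
    and "y \<in> Y" "(y, \<rho> t0) \<in> D" "\<rho> t0 > 0"
    and \<rho>_deriv: "(\<rho> has_real_derivative \<rho>') (at t0)"
    and W_deriv: "(W has_vector_derivative W') (at t0)"
    and curve: "\<And>t. \<rho> t > 0 \<Longrightarrow> W t \<in> Sph \<and> h t = y + \<rho> t *\<^sub>R W t"
    and slice: "\<And>y r w. (y, r) \<in> D \<Longrightarrow> r \<ge> 0 \<Longrightarrow> w \<in> Sph \<Longrightarrow>
                  f (y + r *\<^sub>R w) = F1 (y, r) + mul w (F2 (y, r))"
    and F1_deriv: "((\<lambda>s. F1 ((y, \<rho> t0) + s *\<^sub>R (0, 1))) has_vector_derivative F1') (at 0)"
    and F2_deriv: "((\<lambda>s. F2 ((y, \<rho> t0) + s *\<^sub>R (0, 1))) has_vector_derivative F2') (at 0)"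
  shows "((\<lambda>t. f (h t)) has_vector_derivative
           \<rho>' *\<^sub>R F1' + mul W' (F2 (y, \<rho> t0)) + mul (W t0) (\<rho>' *\<^sub>R F2')) (at t0)"
proof -
  obtain T where T: "open T" "D = (Y \<times> UNIV) \<inter> T"
    using D_open by (auto simp: openin_open)
  define g where "g t = F1 (y, \<rho> t) + mul (W t) (F2 (y, \<rho> t))" for t
  have on_slice: "f (h t) = g t" if "(y, \<rho> t) \<in> T" "\<rho> t > 0" for t
    using that curve slice T(2) \<open>y \<in> Y\<close> unfolding g_def by (simp add: less_imp_le)
  have \<rho>_cont: "isCont \<rho> t0"
    using \<rho>_deriv by (rule DERIV_isCont)
  then have "((\<lambda>t. (y, \<rho> t)) \<longlongrightarrow> (y, \<rho> t0)) (at t0)"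
    by (intro tendsto_intros) (simp add: isCont_def)
  then have "\<forall>\<^sub>F t in at t0. (y, \<rho> t) \<in> T"
    using topological_tendstoD T \<open>(y, \<rho> t0) \<in> D\<close> by blast
  moreover have "\<forall>\<^sub>F t in at t0. \<rho> t > 0"
    using order_tendstoD(1)[OF \<rho>_cont[unfolded isCont_def] \<open>\<rho> t0 > 0\<close>] .
  ultimately have "\<forall>\<^sub>F t in at t0. f (h t) = g t"
    by eventually_elim (rule on_slice)
  moreover have at_t0: "f (h t0) = g t0"
    using on_slice[of t0] T(2) \<open>(y, \<rho> t0) \<in> D\<close> \<open>\<rho> t0 > 0\<close> by auto
  ultimately have eq_near: "\<forall>\<^sub>F t in nhds t0. t \<in> UNIV \<longrightarrow> f (h t) = g t"
    unfolding eventually_at_filter by (auto elim: eventually_mono)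
  have shift: "((\<lambda>t. \<rho> t - \<rho> t0) has_vector_derivative \<rho>') (at t0)"
    using \<rho>_deriv by (auto intro!: derivative_eq_intros simp: has_real_derivative_iff_has_vector_derivative[symmetric])
  have "((\<lambda>t. F1 (y, \<rho> t)) has_vector_derivative \<rho>' *\<^sub>R F1') (at t0)"
    "((\<lambda>t. F2 (y, \<rho> t)) has_vector_derivative \<rho>' *\<^sub>R F2') (at t0)"
    using vector_diff_chain_at[OF shift, of "\<lambda>s. F1 ((y, \<rho> t0) + s *\<^sub>R (0, 1))"]
      vector_diff_chain_at[OF shift, of "\<lambda>s. F2 ((y, \<rho> t0) + s *\<^sub>R (0, 1))"] F1_deriv F2_deriv
    by (simp_all add: o_def)
  then have "(g has_vector_derivative
      \<rho>' *\<^sub>R F1' + mul W' (F2 (y, \<rho> t0)) + mul (W t0) (\<rho>' *\<^sub>R F2')) (at t0)"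
    unfolding g_def
    using bounded_bilinear.has_vector_derivative[OF _ W_deriv] \<open>bilinear mul\<close>
      bilinear_conv_bounded_bilinear
    by (auto intro!: derivative_eq_intros simp: ac_simps)
  then show ?thesis
    using has_vector_derivative_cong_ev[OF eq_near at_t0] by simp
qed

lemma sum_in_sphq: "(\<Sum>s\<in>{p+1..m}. (a s)\<^sup>2) = 1 \<Longrightarrow> (\<Sum>s\<in>{p+1..m}. a s *\<^sub>R v s) \<in> sphq v p m"
  unfolding sphq_def by blast

lemma rad_square: "(rad p m xc)\<^sup>2 = (\<Sum>s\<in>{p+1..m}. (xc s)\<^sup>2)"
  by (simp add: rad_def sum_nonneg)

lemma pt_eq_xpart_plus_xqpart: "p < m \<Longrightarrow> pt v m xc = xpart v p xc + xqpart v p m xc"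
  unfolding pt_def xpart_def xqpart_def by (rule sum_split_at)

lemma normalized_in_sphq:
  assumes "(\<Sum>s\<in>{p+1..m}. (c s)\<^sup>2) > 0"
  shows "inverse (sqrt (\<Sum>s\<in>{p+1..m}. (c s)\<^sup>2)) *\<^sub>R (\<Sum>s\<in>{p+1..m}. c s *\<^sub>R v s) \<in> sphq v p m"
proof -
  let ?n = "sqrt (\<Sum>s\<in>{p+1..m}. (c s)\<^sup>2)"
  have "(\<Sum>s\<in>{p+1..m}. (c s / ?n)\<^sup>2) = 1"
    using assms by (simp add: power_divide sum_divide_distrib[symmetric])
  from sum_in_sphq[OF this] show ?thesis
    by (simp add: scaleR_sum_right divide_inverse mult.commute)
qed

lemma normalized_xqpart_in_sphq:
  assumes "rad p m xc > 0"
  shows "(1 / rad p m xc) *\<^sub>R xqpart v p m xc \<in> sphq v p m"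
proof -
  have "(\<Sum>s\<in>{p+1..m}. (xc s)\<^sup>2) > 0"
    using assms rad_square[of p m xc] by (metis zero_less_power)
  from normalized_in_sphq[OF this] show ?thesis
    by (simp add: rad_def xqpart_def inverse_eq_divide)
qed

lemma xpart_update: "j > p \<Longrightarrow> xpart v p (xc(j := a)) = xpart v p xc"
  unfolding xpart_def by (intro sum.cong) auto

lemma xqpart_update:
  assumes "j \<in> {p+1..m}"
  shows "xqpart v p m (xc(j := a)) = xqpart v p m xc + (a - xc j) *\<^sub>R v j"
proof -
  have "(\<Sum>s\<in>{p+1..m} - {j}. (xc(j := a)) s *\<^sub>R v s) = (\<Sum>s\<in>{p+1..m} - {j}. xc s *\<^sub>R v s)"
    by (intro sum.cong) auto
  then show ?thesis
    unfolding xqpart_def sum.remove[OF finite_atLeastAtMost assms]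
    by (simp add: scaleR_diff_left)
qed

lemma rad_update:
  assumes "j \<in> {p+1..m}"
  shows "rad p m (xc(j := a)) = sqrt ((rad p m xc)\<^sup>2 - (xc j)\<^sup>2 + a\<^sup>2)"
proof -
  have "(\<Sum>s\<in>{p+1..m} - {j}. ((xc(j := a)) s)\<^sup>2) = (\<Sum>s\<in>{p+1..m} - {j}. (xc s)\<^sup>2)"
    by (intro sum.cong) auto
  then show ?thesis
    unfolding rad_square unfolding rad_def sum.remove[OF finite_atLeastAtMost assms]
    by simp
qed

lemma has_real_derivative_sqrt_square_shift:
  fixes r a :: real
  assumes "r > 0"
  shows "((\<lambda>t. sqrt (r\<^sup>2 + 2 * t * a + t\<^sup>2)) has_real_derivative a / r) (at 0)"
proof -
  have "((\<lambda>t. r\<^sup>2 + 2 * t * a + t\<^sup>2) has_real_derivative 2 * a) (at 0)"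
    by (auto intro!: derivative_eq_intros)
  moreover have "DERIV sqrt (r\<^sup>2 + 2 * 0 * a + 0\<^sup>2) :> inverse r / 2"
    using DERIV_real_sqrt[of "r\<^sup>2"] assms by simp
  ultimately have "((\<lambda>t. sqrt (r\<^sup>2 + 2 * t * a + t\<^sup>2)) has_real_derivative inverse r / 2 * (2 * a)) (at 0)"
    by (rule DERIV_chain2[rotated])
  then show ?thesis
    by (simp add: field_simps)
qed

lemma has_vector_derivative_pdir:
  "(\<lambda>t. g (z + t *\<^sub>R u)) differentiable (at 0) \<Longrightarrow>
    ((\<lambda>t. g (z + t *\<^sub>R u)) has_vector_derivative pdir g u z) (at 0)"
  unfolding pdir_def by (rule vector_derivative_works[THEN iffD1])

locale partial_slice = anticommuting_frame mul one cj v "{p+1..m}"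
  for mul :: "'a::euclidean_space \<Rightarrow> 'a \<Rightarrow> 'a" and one cj v and p m :: nat +
  fixes D :: "('a \<times> real) set" and F1 F2 :: "'a \<times> real \<Rightarrow> 'a" and f :: "'a \<Rightarrow> 'a"
  assumes independent_frame: "independent (v ` {0..m})"
    and inj_frame: "inj_on v {0..m}"
    and p_less_m: "p < m"
    and D_subset: "D \<subseteq> span (v ` {0..p}) \<times> UNIV"
    and D_open: "openin (top_of_set (span (v ` {0..p}) \<times> (UNIV :: real set))) D"
    and F1_radially_differentiable: "\<And>z. z \<in> D \<Longrightarrow> (\<lambda>t. F1 (z + t *\<^sub>R (0, 1))) differentiable (at 0)"
    and F2_radially_differentiable: "\<And>z. z \<in> D \<Longrightarrow> (\<lambda>t. F2 (z + t *\<^sub>R (0, 1))) differentiable (at 0)"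
    and slice: "\<And>y r w. (y, r) \<in> D \<Longrightarrow> r \<ge> 0 \<Longrightarrow> w \<in> sphq v p m \<Longrightarrow>
                  f (y + r *\<^sub>R w) = F1 (y, r) + mul w (F2 (y, r))"
begin

lemma OmegaD_coordinates:
  assumes pt: "pt v m xc = y + r *\<^sub>R w"
    and "y \<in> span (v ` {0..p})" "r \<ge> 0" "w \<in> sphq v p m"
  shows "xpart v p xc = y" "rad p m xc = r"
proof -
  obtain c where w: "w = (\<Sum>s\<in>{p+1..m}. c s *\<^sub>R v s)" and c_norm: "(\<Sum>s\<in>{p+1..m}. (c s)\<^sup>2) = 1"
    using \<open>w \<in> sphq v p m\<close> unfolding sphq_def by blast
  have "inj_on v {0..p}"
    using inj_frame p_less_m by (auto intro: inj_on_subset)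
  then obtain d where y: "y = (\<Sum>s\<in>{0..p}. d s *\<^sub>R v s)"
    using span_image_as_sum \<open>y \<in> span (v ` {0..p})\<close> by blast
  define e where "e s = (if s \<le> p then d s else r * c s)" for s
  have "(\<Sum>s\<in>{0..m}. xc s *\<^sub>R v s) = (\<Sum>s\<in>{0..m}. e s *\<^sub>R v s)"
    unfolding sum_split_at[OF p_less_m, of "\<lambda>s. e s *\<^sub>R v s"] pt[unfolded pt_def] y w
    by (simp add: e_def scaleR_sum_right)
  then have xc_e: "xc s = e s" if "s \<in> {0..m}" for s
    using independent_coefficients_unique[OF _ inj_frame independent_frame _ that] by blast
  show "xpart v p xc = y"
    unfolding xpart_def y using xc_e p_less_m by (intro sum.cong) (auto simp: e_def)
  have "(\<Sum>s\<in>{p+1..m}. (xc s)\<^sup>2) = (\<Sum>s\<in>{p+1..m}. r\<^sup>2 * (c s)\<^sup>2)"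
    using xc_e by (intro sum.cong) (auto simp: e_def power_mult_distrib)
  then show "rad p m xc = r"
    using c_norm \<open>r \<ge> 0\<close> by (simp add: rad_def sum_distrib_left[symmetric])
qed

context
  fixes xc :: "nat \<Rightarrow> real"
  assumes in_OmegaD: "pt v m xc \<in> OmegaD v p m D"
    and off_axis: "pt v m xc \<notin> span (v ` {0..p})"
begin

abbreviation "x\<^sub>p \<equiv> xpart v p xc"
abbreviation "x\<^sub>q \<equiv> xqpart v p m xc"
abbreviation "r \<equiv> rad p m xc"
abbreviation "\<omega> \<equiv> (1 / r) *\<^sub>R x\<^sub>q"

lemma rad_pos: "r > 0" and xpart_rad_in_D: "(x\<^sub>p, r) \<in> D"
proof -
  obtain y \<rho> w where pt: "pt v m xc = y + \<rho> *\<^sub>R w" and "(y, \<rho>) \<in> D" "\<rho> \<ge> 0" "w \<in> sphq v p m"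
    using in_OmegaD unfolding OmegaD_def by blast
  moreover have "y \<in> span (v ` {0..p})"
    using \<open>(y, \<rho>) \<in> D\<close> D_subset by auto
  ultimately have "x\<^sub>p = y" "r = \<rho>"
    using OmegaD_coordinates by blast+
  then show "(x\<^sub>p, r) \<in> D"
    using \<open>(y, \<rho>) \<in> D\<close> by simp
  show "r > 0"
  proof (rule ccontr)
    assume "\<not> r > 0"
    then have "pt v m xc = y"
      using pt \<open>r = \<rho>\<close> \<open>\<rho> \<ge> 0\<close> by simp
    then show False
      using off_axis \<open>y \<in> span (v ` {0..p})\<close> by simp
  qed
qed

abbreviation "f\<^sub>r \<equiv> pdir F1 (0, 1) (x\<^sub>p, r) + mul \<omega> (pdir F2 (0, 1) (x\<^sub>p, r))"

lemma omega_in_sphq: "\<omega> \<in> sphq v p m" "- \<omega> \<in> sphq v p m"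
proof -
  show "\<omega> \<in> sphq v p m"
    using normalized_xqpart_in_sphq[OF rad_pos] .
  have "rad p m (\<lambda>s. - xc s) = r" "xqpart v p m (\<lambda>s. - xc s) = - x\<^sub>q"
    by (simp_all add: rad_def xqpart_def sum_negf)
  then show "- \<omega> \<in> sphq v p m"
    using normalized_xqpart_in_sphq[of p m "\<lambda>s. - xc s" v] rad_pos by simp
qed

lemma xqpart_eq_rad_omega: "x\<^sub>q = r *\<^sub>R \<omega>"
  using rad_pos by simp

lemma F_radial_derivatives:
  "((\<lambda>s. F1 ((x\<^sub>p, r) + s *\<^sub>R (0, 1))) has_vector_derivative pdir F1 (0, 1) (x\<^sub>p, r)) (at 0)"
  "((\<lambda>s. F2 ((x\<^sub>p, r) + s *\<^sub>R (0, 1))) has_vector_derivative pdir F2 (0, 1) (x\<^sub>p, r)) (at 0)"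
  using F1_radially_differentiable F2_radially_differentiable xpart_rad_in_D
  by (blast intro: has_vector_derivative_pdir)+

lemma xpart_in_span: "x\<^sub>p \<in> span (v ` {0..p})"
  using xpart_rad_in_D D_subset by auto

lemma xqpart_mul_mul_self: "mul x\<^sub>q (mul x\<^sub>q z) = - r\<^sup>2 *\<^sub>R z"
  using frame_vector_mul_mul_self[of xc z] unfolding xqpart_def rad_square .

lemma sph_deriv_eq: "sph_deriv mul one v p m f xc = (1 / r) *\<^sub>R F2 (x\<^sub>p, r)"
proof -
  let ?F = "F2 (x\<^sub>p, r)"
  have "f (pt v m xc) = F1 (x\<^sub>p, r) + mul \<omega> ?F"
    using slice[OF xpart_rad_in_D _ omega_in_sphq(1)] rad_pos xqpart_eq_rad_omega
      pt_eq_xpart_plus_xqpart[OF p_less_m, of v xc] by simp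
  moreover have "f (x\<^sub>p - x\<^sub>q) = F1 (x\<^sub>p, r) - mul \<omega> ?F"
    using slice[OF xpart_rad_in_D _ omega_in_sphq(2)] rad_pos xqpart_eq_rad_omega
    by (simp add: mul_simps)
  moreover have "ainv mul one x\<^sub>q = - inverse (r\<^sup>2) *\<^sub>R x\<^sub>q"
    using frame_vector_ainv[of xc, unfolded rad_square[symmetric]] rad_pos
    unfolding xqpart_def by simp
  ultimately have "sph_deriv mul one v p m f xc = - (inverse (r\<^sup>2) / r) *\<^sub>R mul x\<^sub>q (mul x\<^sub>q ?F)"
    by (simp add: sph_deriv_def mul_simps scaleR_2[symmetric])
  also have "\<dots> = (1 / r) *\<^sub>R ?F"
    using rad_pos by (simp add: xqpart_mul_mul_self field_simps power2_eq_square)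
  finally show ?thesis .
qed

lemma radial_derivative: "((\<lambda>t. f (x\<^sub>p + t *\<^sub>R \<omega>)) has_vector_derivative f\<^sub>r) (at r)"
proof -
  have "((\<lambda>t. f (x\<^sub>p + t *\<^sub>R \<omega>)) has_vector_derivative
      1 *\<^sub>R pdir F1 (0, 1) (x\<^sub>p, r) + mul 0 (F2 (x\<^sub>p, r)) + mul \<omega> (1 *\<^sub>R pdir F2 (0, 1) (x\<^sub>p, r))) (at r)"
    by (rule slice_function_has_vector_derivative[OF mul_bilinear D_open xpart_in_span,
          where \<rho> = "\<lambda>t. t" and W = "\<lambda>t. \<omega>"])
      (use xpart_rad_in_D rad_pos omega_in_sphq slice F_radial_derivatives in
        \<open>auto intro: derivative_eq_intros\<close>)
  then show ?thesis
    by (simp add: mul_simps)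
qed

(* The line x + t v_j is the curve x_p + rho(t) W(t) inside the slices, where rho(t) and W(t) are
   the radius and direction of the shifted point. *)
lemma coordinate_derivative:
  assumes j: "j \<in> {p+1..m}"
  shows "pdir f (v j) (pt v m xc)
    = (xc j / r) *\<^sub>R f\<^sub>r + mul ((1 / r) *\<^sub>R v j - (xc j / r ^ 3) *\<^sub>R x\<^sub>q) (F2 (x\<^sub>p, r))"
proof -
  define \<rho> where "\<rho> t = rad p m (xc(j := xc j + t))" for t
  define W where "W t = (1 / \<rho> t) *\<^sub>R xqpart v p m (xc(j := xc j + t))" for t
  have \<rho>_eq: "\<rho> = (\<lambda>t. sqrt (r\<^sup>2 + 2 * t * xc j + t\<^sup>2))"
    by (auto simp: \<rho>_def rad_update[OF j] power2_eq_square algebra_simps)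
  have W_eq: "W = (\<lambda>t. inverse (\<rho> t) *\<^sub>R (x\<^sub>q + t *\<^sub>R v j))"
    by (auto simp: W_def xqpart_update[OF j] inverse_eq_divide)
  have \<rho>0: "\<rho> 0 = r" and W0: "W 0 = \<omega>"
    using rad_pos by (simp_all add: \<rho>_def W_def)
  have \<rho>_deriv: "(\<rho> has_real_derivative xc j / r) (at 0)"
    unfolding \<rho>_eq by (rule has_real_derivative_sqrt_square_shift[OF rad_pos])
  have "(W has_vector_derivative
      inverse (\<rho> 0) *\<^sub>R v j + (- (xc j / r * inverse (\<rho> 0 ^ Suc (Suc 0)))) *\<^sub>R (x\<^sub>q + 0 *\<^sub>R v j)) (at 0)"
    unfolding W_eq
    by (rule has_vector_derivative_scaleR[OF DERIV_inverse_fun[OF \<rho>_deriv]])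
      (use \<rho>0 rad_pos in \<open>auto intro!: derivative_eq_intros\<close>)
  then have W_deriv: "(W has_vector_derivative (1 / r) *\<^sub>R v j - (xc j / r ^ 3) *\<^sub>R x\<^sub>q) (at 0)"
    using rad_pos by (simp add: \<rho>0 field_simps power2_eq_square power3_eq_cube)
  have curve: "W t \<in> sphq v p m \<and> pt v m xc + t *\<^sub>R v j = x\<^sub>p + \<rho> t *\<^sub>R W t" if "\<rho> t > 0" for t
    using that normalized_xqpart_in_sphq[of p m "xc(j := xc j + t)" v] j
      pt_eq_xpart_plus_xqpart[OF p_less_m, of v xc]
    by (auto simp: \<rho>_def W_def xqpart_update[OF j] xpart_update[of p j])
  have "((\<lambda>t. f (pt v m xc + t *\<^sub>R v j)) has_vector_derivative
      (xc j / r) *\<^sub>R pdir F1 (0, 1) (x\<^sub>p, r)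
      + mul ((1 / r) *\<^sub>R v j - (xc j / r ^ 3) *\<^sub>R x\<^sub>q) (F2 (x\<^sub>p, r))
      + mul \<omega> ((xc j / r) *\<^sub>R pdir F2 (0, 1) (x\<^sub>p, r))) (at 0)"
    using slice_function_has_vector_derivative[OF mul_bilinear D_open xpart_in_span _ _ \<rho>_deriv
        W_deriv curve slice] xpart_rad_in_D rad_pos F_radial_derivatives
    unfolding \<rho>0 W0 by blast
  then show ?thesis
    unfolding pdir_def by (subst vector_derivative_at) (auto simp: mul_simps algebra_simps)
qed

lemma Gamma_op_eq:
  "Gamma_op mul v p m f xc = (real (m - p) - 1) *\<^sub>R mul x\<^sub>q (sph_deriv mul one v p m f xc)"
proof -
  have "Gamma_op mul v p m f xc = (- (1 / 2) * ((2 - 2 * real (m - p)) / r)) *\<^sub>R mul x\<^sub>q (F2 (x\<^sub>p, r))"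
    using frame_Gamma_sum[where d = "\<lambda>j. pdir f (v j) (pt v m xc)",
        OF coordinate_derivative[unfolded xqpart_def]]
    by (simp add: Gamma_op_def xqpart_def)
  also have "- (1 / 2) * ((2 - 2 * real (m - p)) / r) = (real (m - p) - 1) * (1 / r)"
    using rad_pos by (simp add: field_simps)
  finally show ?thesis
    by (simp add: sph_deriv_eq mul_simps)
qed

lemma Dirac_diff_eq:
  "Dx_op mul v m f xc - Domega_op mul v p m f xc = (1 - real (m - p)) *\<^sub>R sph_deriv mul one v p m f xc"
proof -
  have "(\<Sum>j\<in>{p+1..m}. mul (v j) (pdir f (v j) (pt v m xc)))
      = mul \<omega> f\<^sub>r + ((1 - real (m - p)) / r) *\<^sub>R F2 (x\<^sub>p, r)"
    using frame_Dirac_sum[where d = "\<lambda>j. pdir f (v j) (pt v m xc)",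
        OF coordinate_derivative[unfolded xqpart_def] rad_square[symmetric] rad_pos]
    by (simp add: xqpart_def)
  moreover have "Domega_op mul v p m f xc
      = (\<Sum>s\<in>{0..p}. mul (v s) (pdir f (v s) (pt v m xc))) + mul \<omega> f\<^sub>r"
    using vector_derivative_at[OF radial_derivative] xqpart_eq_rad_omega
      pt_eq_xpart_plus_xqpart[OF p_less_m, of v xc]
    by (simp add: Domega_op_def Let_def)
  ultimately show ?thesis
    using rad_pos
    by (simp add: Dx_op_def sum_split_at[OF p_less_m] sph_deriv_eq field_simps)
qed

end

end

theorem proposition4p6:
  fixes mul :: "'a::euclidean_space \<Rightarrow> 'a \<Rightarrow> 'a"
    and one :: 'a and cj :: "'a \<Rightarrow> 'a"
    and v :: "nat \<Rightarrow> 'a" and m p :: nat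
    and D :: "('a \<times> real) set"
    and F1 F2 :: "'a \<times> real \<Rightarrow> 'a" and f :: "'a \<Rightarrow> 'a"
  assumes alg: "alt_algebra_inv mul one cj"
    and dim: "DIM('a) > 1"
    and SA_ne: "SA mul one cj \<noteq> {}"
    and m1: "m \<ge> 1"
    and basis_indep: "independent (v ` {0..m})" and basis_inj: "inj_on v {0..m}"
    and v0: "v 0 = one"
    and vS: "\<forall>s\<in>{1..m}. v s \<in> SA mul one cj"
    and vanti: "\<forall>s\<in>{1..m}. \<forall>t\<in>{1..m}. s \<noteq> t \<longrightarrow> mul (v s) (v t) = - mul (v t) (v s)"
    and MQ: "span (v ` {0..m}) \<subseteq> QA mul one cj"
    and pm: "p < m"
    and D_sub: "D \<subseteq> span (v ` {0..p}) \<times> UNIV"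
    and D_open: "openin (top_of_set (span (v ` {0..p}) \<times> (UNIV :: real set))) D"
    and D_sym: "\<forall>y r. (y, r) \<in> D \<longrightarrow> (y, - r) \<in> D"
    and F1_even: "\<forall>y r. (y, r) \<in> D \<longrightarrow> F1 (y, - r) = F1 (y, r)"
    and F2_odd: "\<forall>y r. (y, r) \<in> D \<longrightarrow> F2 (y, - r) = - F2 (y, r)"
    and F1_C1: "C1_dirs ((\<lambda>s. (v s, 0)) ` {0..p} \<union> {(0, 1)}) D F1"
    and F2_C1: "C1_dirs ((\<lambda>s. (v s, 0)) ` {0..p} \<union> {(0, 1)}) D F2"
    and f_slice: "\<forall>y r w. (y, r) \<in> D \<and> r \<ge> 0 \<and> w \<in> sphq v p m \<longrightarrow>
                    f (y + r *\<^sub>R w) = F1 (y, r) + mul w (F2 (y, r))"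
    and f_C1: "C1_dirs (v ` {0..m}) (OmegaD v p m D) f"
  shows "\<forall>xc. pt v m xc \<in> OmegaD v p m D \<and> pt v m xc \<notin> span (v ` {0..p}) \<longrightarrow>
           Gamma_op mul v p m f xc
             = (real (m - p) - 1) *\<^sub>R mul (xqpart v p m xc) (sph_deriv mul one v p m f xc)
         \<and> Dx_op mul v m f xc - Domega_op mul v p m f xc
             = (1 - real (m - p)) *\<^sub>R sph_deriv mul one v p m f xc"
proof -
  have radial_direction: "(0, 1) \<in> (\<lambda>s. (v s, 0)) ` {0..p} \<union> {(0 :: 'a, 1 :: real)}"
    by simp
  (* Only the radial derivatives of the stem function enter. *)
  interpret partial_slice mul one cj v p m D F1 F2 f
  proof unfold_locales
    show "\<And>s. s \<in> {p+1..m} \<Longrightarrow> v s \<in> SA mul one cj"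
      using vS by simp
    show "\<And>s t. s \<in> {p+1..m} \<Longrightarrow> t \<in> {p+1..m} \<Longrightarrow> s \<noteq> t \<Longrightarrow>
        mul (v s) (v t) = - mul (v t) (v s)"
      by (rule vanti[rule_format]) auto
    show "\<And>z. z \<in> D \<Longrightarrow> (\<lambda>t. F1 (z + t *\<^sub>R (0, 1))) differentiable (at 0)"
      "\<And>z. z \<in> D \<Longrightarrow> (\<lambda>t. F2 (z + t *\<^sub>R (0, 1))) differentiable (at 0)"
      using F1_C1 F2_C1 radial_direction unfolding C1_dirs_def by simp_all
    show "\<And>y r w. (y, r) \<in> D \<Longrightarrow> r \<ge> 0 \<Longrightarrow> w \<in> sphq v p m \<Longrightarrow>
        f (y + r *\<^sub>R w) = F1 (y, r) + mul w (F2 (y, r))"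
      using f_slice by blast
  qed (fact alg basis_indep basis_inj pm D_sub D_open finite_atLeastAtMost)+
  show ?thesis
    using Gamma_op_eq Dirac_diff_eq by blast
qed

end
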